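(* The automorphism $\mathcal R^{\mathcal W}$ acts on central elements of $\operatorname{Div}(\mathcal W_\xi^{\otimes2})$ by \[ \mathcal R^{\mathcal W}(z_i)=z_i,\quad \mathcal R^{\mathcal W}(x_1^N)=x_1^NG,\quad \mathcal R^{\mathcal W}(x_2^N)=x_2^NG^{-1}, \] \[ \mathcal R^{\mathcal W}(y_1^{-N})=y_2^{-N}+\Big(y_1^{-N}-\frac{y_2^{-N}}{z_2^N}\Big)x_2^{-N},\qquad \mathcal R^{\mathcal W}(y_2^{N})=\frac{z_1^N}{z_2^N}y_1^N+\Big(y_2^N-\frac{y_1^N}{z_2^N}\Big)x_1^N, \] with $G=1+x_1^{-N}\frac{y_1^N}{y_2^N}(x_1^N-z_1^N)(x_2^N-z_2^{-N})$, and the inverse acts by \[ (\mathcal R^{\mathcal W})^{-1}(x_1^N)=x_1^N\tilde G^{-1},\quad (\mathcal R^{\mathcal W})^{-1}(x_2^N)=x_2^N\tilde G, \] \[ (\mathcal R^{\mathcal W})^{-1}(y_1^{-N})=\frac{z_1^N}{z_2^N}y_2^{-N}+(y_1^{-N}-z_1^Ny_2^{-N})x_2^N,\qquad (\mathcal R^{\mathcal W})^{-1}(y_2^N)=y_1^N+(y_2^N-z_1^Ny_1^N)x_1^{-N}, \] with $\tilde G=1+x_2^{-N}\frac{y_1^N}{y_2^N}(x_1^N-z_1^N)(x_2^N-z_2^{-N})$.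
   Context: $N\ge2$, $\xi=e^{\pi i/N}$. $\mathcal W_\xi$ is the $\mathbb C$-algebra generated by invertible $x,y$ and central invertible $z$ with $xy=\xi^2yx$; in $\mathcal W_\xi^{\otimes 2}$ write $x_1=x\otimes 1$, $y_2=1\otimes y$, etc. $\mathcal R^{\mathcal W}$ is the algebra automorphism of the division algebra $\operatorname{Div}(\mathcal W_\xi^{\otimes2})$ given on generators (with $q=\xi$) by $\mathcal R^{\mathcal W}(z_i)=z_i$, $\mathcal R^{\mathcal W}(x_1)=x_1g$, $\mathcal R^{\mathcal W}(x_2)=g^{-1}x_2$, $\mathcal R^{\mathcal W}(y_1^{-1})=y_2^{-1}+(y_1^{-1}-z_2^{-1}y_2^{-1})x_2^{-1}$, $\mathcal R^{\mathcal W}(y_2)=\frac{z_1}{z_2}y_1+(y_2-z_2^{-1}y_1)x_1$, where $g=1-x_1^{-1}y_1(z_1-x_1)y_2^{-1}(x_2-z_2^{-1})$. *)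

theory Defs
  imports Complex_Main
begin

definition xi :: "nat \<Rightarrow> complex" where
  "xi N = cis (pi / real N)"

text \<open>Exponent vectors for normally ordered monomials
  x1^a1 y1^b1 z1^c1 x2^a2 y2^b2 z2^c2 of the quantum torus W_xi tensor W_xi.\<close>
type_synonym exps = "int \<times> int \<times> int \<times> int \<times> int \<times> int"

definition mono ::
  "'a::division_ring \<Rightarrow> 'a \<Rightarrow> 'a \<Rightarrow> 'a \<Rightarrow> 'a \<Rightarrow> 'a \<Rightarrow> exps \<Rightarrow> 'a" where
  "mono x1 y1 z1 x2 y2 z2 m =
     (case m of (a1, b1, c1, a2, b2, c2) \<Rightarrow>
        x1 powi a1 * y1 powi b1 * z1 powi c1 * x2 powi a2 * y2 powi b2 * z2 powi c2)"

text \<open>Evaluation of a finitely supported complex coefficient function on exponent vectors,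
  i.e. the image of an element of W_xi tensor W_xi, complex scalars acting through c.\<close>
definition qeval ::
  "(complex \<Rightarrow> 'a::division_ring) \<Rightarrow> 'a \<Rightarrow> 'a \<Rightarrow> 'a \<Rightarrow> 'a \<Rightarrow> 'a \<Rightarrow> 'a \<Rightarrow> (exps \<Rightarrow> complex) \<Rightarrow> 'a" where
  "qeval c x1 y1 z1 x2 y2 z2 f =
     (\<Sum>m\<in>{m. f m \<noteq> 0}. c (f m) * mono x1 y1 z1 x2 y2 z2 m)"

text \<open>D (the carrier type, with complex scalars via the central embedding c) is the
  division algebra Div(W_xi tensor W_xi), presented via the generators x1,y1,z1,x2,y2,z2:
  c is a central embedding of the complex numbers; the generators satisfy exactly the
  defining relations of W_xi tensor W_xi (normally ordered monomials are linearly independent,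
  so the induced map from W_xi tensor W_xi is injective); and every element of D is a fraction
  a * s^-1 of elements of (the image of) W_xi tensor W_xi (classical ring of fractions).\<close>
definition is_Div_W2 ::
  "nat \<Rightarrow> (complex \<Rightarrow> 'a::division_ring) \<Rightarrow> 'a \<Rightarrow> 'a \<Rightarrow> 'a \<Rightarrow> 'a \<Rightarrow> 'a \<Rightarrow> 'a \<Rightarrow> bool" where
  "is_Div_W2 N c x1 y1 z1 x2 y2 z2 \<longleftrightarrow>
     c 1 = 1 \<and> (\<forall>a b. c (a + b) = c a + c b) \<and> (\<forall>a b. c (a * b) = c a * c b) \<and>
     (\<forall>a d. c a * d = d * c a) \<and>
     x1 \<noteq> 0 \<and> y1 \<noteq> 0 \<and> z1 \<noteq> 0 \<and> x2 \<noteq> 0 \<and> y2 \<noteq> 0 \<and> z2 \<noteq> 0 \<and>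
     x1 * y1 = c ((xi N)\<^sup>2) * y1 * x1 \<and> x2 * y2 = c ((xi N)\<^sup>2) * y2 * x2 \<and>
     (\<forall>u\<in>{x1, y1, z1, x2, y2, z2}. z1 * u = u * z1 \<and> z2 * u = u * z2) \<and>
     (\<forall>u\<in>{x1, y1}. \<forall>v\<in>{x2, y2}. u * v = v * u) \<and>
     (\<forall>f. finite {m. f m \<noteq> 0} \<longrightarrow> qeval c x1 y1 z1 x2 y2 z2 f = 0 \<longrightarrow> (\<forall>m. f m = 0)) \<and>
     (\<forall>d. \<exists>f s. finite {m. f m \<noteq> 0} \<and> finite {m. s m \<noteq> 0} \<and>
             qeval c x1 y1 z1 x2 y2 z2 s \<noteq> 0 \<and>
             d = qeval c x1 y1 z1 x2 y2 z2 f * inverse (qeval c x1 y1 z1 x2 y2 z2 s))"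

definition is_alg_aut :: "(complex \<Rightarrow> 'a::division_ring) \<Rightarrow> ('a \<Rightarrow> 'a) \<Rightarrow> bool" where
  "is_alg_aut c R \<longleftrightarrow> bij R \<and> R 1 = 1 \<and> (\<forall>a b. R (a + b) = R a + R b) \<and>
     (\<forall>a b. R (a * b) = R a * R b) \<and> (\<forall>s. R (c s) = c s)"

end

theory Submission
  imports Defs
begin

(* Write q = \<xi>^2, a primitive N-th root of unity. If A B = q B A, the Gaussian binomials
   [N,k]_q vanish for 0 < k < N, so (A + B)^N = A^N + B^N; and if x y = q y x then
   (y x)^N = \<xi>^(N(N-1)) y^N x^N = (-1)^(N-1) y^N x^N. Each of R x1, R (y1^-1) and R y2 is a sum
   of two q-commuting terms, so their N-th powers can be computed termwise, and the results
   lie in the centre, which is a field containing x_i^N, y_i^N, z_i^N. Since R is bijective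
   it restricts to an automorphism of the centre, and the formulas for the inverse follow by
   checking that R maps the claimed preimages back to x1^N, x2^N, y1^-N, y2^N: three
   rational-function identities. *)

section \<open>Commuting elements and the centre of a division ring\<close>

definition commute :: "'a::times \<Rightarrow> 'a \<Rightarrow> bool" where
  "commute a b \<longleftrightarrow> a * b = b * a"

lemma commute_refl: "commute a a"
  by (simp add: commute_def)

lemma commute_sym: "commute a b \<Longrightarrow> commute b a"
  by (simp add: commute_def)

lemma commute_one: "commute a 1" "commute 1 a"
  for a :: "'a::monoid_mult"
  by (simp_all add: commute_def)

lemma commute_diff: "commute a b \<Longrightarrow> commute a c \<Longrightarrow> commute a (b - c)"
  and commute_diff_left: "commute b a \<Longrightarrow> commute c a \<Longrightarrow> commute (b - c) a"
  for a b c :: "'a::ring"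
  by (simp_all add: commute_def algebra_simps)

lemma commute_minus: "commute a b \<Longrightarrow> commute a (- b)"
  and commute_minus_left: "commute b a \<Longrightarrow> commute (- b) a"
  for a b :: "'a::ring"
  by (simp_all add: commute_def)

lemma commute_mult: "commute a b \<Longrightarrow> commute a c \<Longrightarrow> commute a (b * c)"
  and commute_mult_left: "commute b a \<Longrightarrow> commute c a \<Longrightarrow> commute (b * c) a"
  for a b c :: "'a::semigroup_mult"
  by (simp_all add: commute_def) (metis mult.assoc)+

lemma commute_inverse: "commute a b \<Longrightarrow> commute a (inverse b)"
  and commute_inverse_left: "commute b a \<Longrightarrow> commute (inverse b) a"
  for a b :: "'a::division_ring"
proof -
  have inverse_commute: "commute (inverse b) a" if "commute b a" for a b :: 'a
  proof (cases "b = 0")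
    case False
    have "inverse b * a = inverse b * (a * b) * inverse b"
      using False by (simp add: mult.assoc)
    also have "\<dots> = inverse b * (b * a) * inverse b"
      using that by (simp add: commute_def)
    also have "\<dots> = a * inverse b"
      using False by (simp add: mult.assoc[symmetric])
    finally show ?thesis
      unfolding commute_def .
  qed (simp add: commute_def)
  show "commute a b \<Longrightarrow> commute a (inverse b)" "commute b a \<Longrightarrow> commute (inverse b) a"
    using inverse_commute by (auto intro: commute_sym)
qed

lemma commute_power: "commute a b \<Longrightarrow> commute a (b ^ n)"
  and commute_power_left: "commute b a \<Longrightarrow> commute (b ^ n) a"
  for a b :: "'a::monoid_mult"
  by (simp_all add: commute_def power_commuting_commutes)

lemma commute_power_int: "commute a b \<Longrightarrow> commute a (b powi n)"
  for a b :: "'a::division_ring"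
  by (simp add: power_int_def commute_power commute_inverse)

lemma commute_sum: "(\<And>i. i \<in> A \<Longrightarrow> commute a (f i)) \<Longrightarrow> commute a (sum f A)"
  for a :: "'a::semiring_0"
  unfolding commute_def sum_distrib_left sum_distrib_right by (intro sum.cong refl) simp

lemma commute_left_commute: "commute a b \<Longrightarrow> a * (b * c) = b * (a * c)"
  for a b c :: "'a::semigroup_mult"
  by (simp add: commute_def flip: mult.assoc)

lemma power_mult_commute:
  fixes a b :: "'a::monoid_mult"
  assumes "commute a b"
  shows "(a * b) ^ n = a ^ n * b ^ n"
proof (induction n)
  case (Suc n)
  have ba: "b * a ^ n = a ^ n * b"
    using assms by (simp add: commute_def power_commuting_commutes)
  have "(a * b) ^ Suc n = a * (b * a ^ n) * b ^ n"
    by (simp only: power_Suc Suc mult.assoc)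
  also have "\<dots> = a ^ Suc n * b ^ Suc n"
    by (simp only: ba power_Suc mult.assoc)
  finally show ?case .
qed simp

lemma minus_one_power_mult_self: "(-1) ^ n * ((-1) ^ n * a) = (a::'a::ring_1)"
  by (induction n) simp_all

lemma minus_one_power_mult_mult: "(-1) ^ n * a * ((-1) ^ n * b) = a * (b::'a::ring_1)"
  by (induction n) simp_all

lemma commute_minus_one_power: "commute ((-1) ^ n) (a::'a::ring_1)"
  by (intro commute_power_left commute_minus_left commute_one)

typedef (overloaded) 'a center = "{a::'a::division_ring. \<forall>b. commute a b}"
  morphisms of_center to_center
  by (rule exI[of _ 0]) (simp add: commute_def)

setup_lifting type_definition_center

instantiation center :: (division_ring) field
begin

lift_definition zero_center :: "'a center" is 0
  by (simp add: commute_def)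
lift_definition one_center :: "'a center" is 1
  by (simp add: commute_one)
lift_definition plus_center :: "'a center \<Rightarrow> 'a center \<Rightarrow> 'a center" is "(+)"
  by (simp add: commute_def distrib_left distrib_right)
lift_definition minus_center :: "'a center \<Rightarrow> 'a center \<Rightarrow> 'a center" is "(-)"
  by (simp add: commute_diff_left)
lift_definition uminus_center :: "'a center \<Rightarrow> 'a center" is uminus
  by (simp add: commute_minus_left)
lift_definition times_center :: "'a center \<Rightarrow> 'a center \<Rightarrow> 'a center" is "(*)"
  by (simp add: commute_mult_left)
lift_definition inverse_center :: "'a center \<Rightarrow> 'a center" is inverse
  by (simp add: commute_inverse_left)
lift_definition divide_center :: "'a center \<Rightarrow> 'a center \<Rightarrow> 'a center" is "\<lambda>a b. a * inverse b"
  by (simp add: commute_mult_left commute_inverse_left)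

instance
proof
  fix a b c :: "'a center"
  show "a * b * c = a * (b * c)" by transfer (rule mult.assoc)
  show "a * b = b * a" by transfer (metis commute_def)
  show "1 * a = a" by transfer (rule mult_1_left)
  show "a + b + c = a + (b + c)" by transfer (rule add.assoc)
  show "a + b = b + a" by transfer (rule add.commute)
  show "0 + a = a" by transfer (rule add_0_left)
  show "- a + a = 0" by transfer (rule left_minus)
  show "a - b = a + - b" by transfer (rule diff_conv_add_uminus)
  show "(a + b) * c = a * c + b * c" by transfer (rule distrib_right)
  show "(0::'a center) \<noteq> 1" by transfer (rule zero_neq_one)
  show "a \<noteq> 0 \<Longrightarrow> inverse a * a = 1" by transfer (rule left_inverse)
  show "a div b = a * inverse b" by transfer (rule refl)
  show "inverse (0::'a center) = 0" by transfer (rule inverse_zero)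
qed

end

lemma of_center_hom [simp]:
  "of_center 0 = 0" "of_center 1 = 1"
  "of_center (a + b) = of_center a + of_center b" "of_center (a - b) = of_center a - of_center b"
  "of_center (- a) = - of_center a" "of_center (a * b) = of_center a * of_center b"
  "of_center (inverse a) = inverse (of_center a)" "of_center (a / b) = of_center a / of_center b"
  by (simp_all add: zero_center.rep_eq one_center.rep_eq plus_center.rep_eq minus_center.rep_eq
      uminus_center.rep_eq times_center.rep_eq inverse_center.rep_eq divide_center.rep_eq
      divide_inverse)

lemma of_center_power [simp]: "of_center (a ^ n) = of_center a ^ n"
  by (induction n) simp_all

lemma of_center_eq_iff [simp]: "of_center a = of_center b \<longleftrightarrow> a = b"
  by (rule of_center_inject)

lemma of_center_to_center: "(\<And>b. commute a b) \<Longrightarrow> of_center (to_center a) = a"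
  by (rule to_center_inverse) blast

lemma commute_of_center: "commute (of_center a) b" "commute b (of_center a)"
  using of_center[of a] by (auto intro: commute_sym)

lemma of_center_left_commute: "b * (of_center a * c) = of_center a * (b * c)"
  using commute_of_center(2) by (rule commute_left_commute)

lemmas commute_intros = commute_refl commute_of_center
  commute_diff commute_minus commute_mult commute_inverse commute_power
  commute_diff_left commute_minus_left commute_mult_left commute_inverse_left commute_power_left

section \<open>Gaussian binomials at a root of unity\<close>

definition primitive_root :: "'a::comm_ring_1 \<Rightarrow> nat \<Rightarrow> bool" where
  "primitive_root q n \<longleftrightarrow> 0 < n \<and> q ^ n = 1 \<and> (\<forall>k. 0 < k \<longrightarrow> k < n \<longrightarrow> q ^ k \<noteq> 1)"

lemma primitive_root_inverse: "primitive_root q n \<Longrightarrow> primitive_root (inverse q) n"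
  for q :: "'a::field"
  by (simp add: primitive_root_def power_inverse)

fun qbinomial :: "'a::comm_ring_1 \<Rightarrow> nat \<Rightarrow> nat \<Rightarrow> 'a" where
  "qbinomial q n 0 = 1"
| "qbinomial q 0 (Suc k) = 0"
| "qbinomial q (Suc n) (Suc k) = qbinomial q n (Suc k) + q ^ (n - k) * qbinomial q n k"

lemma qbinomial_eq_0: "n < k \<Longrightarrow> qbinomial q n k = 0"
  by (induction q n k rule: qbinomial.induct) auto

lemma qbinomial_self [simp]: "qbinomial q n n = 1"
  by (induction n) (simp_all add: qbinomial_eq_0)

lemma qbinomial_one: "(1 - q) * qbinomial q n 1 = 1 - q ^ n"
proof (induction n)
  case (Suc n)
  have "(1 - q) * qbinomial q (Suc n) 1 = (1 - q) * qbinomial q n 1 + (1 - q) * q ^ n"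
    by (simp add: algebra_simps)
  also have "\<dots> = 1 - q ^ Suc n"
    unfolding Suc by (simp add: algebra_simps)
  finally show ?case .
qed simp

lemma qbinomial_Suc_ratio:
  "(1 - q ^ Suc k) * qbinomial q n (Suc k) = (1 - q ^ (n - k)) * qbinomial q n k"
proof (induction n arbitrary: k)
  case 0
  then show ?case
    by (cases k) simp_all
next
  case (Suc n)
  show ?case
  proof (cases k)
    case 0
    then show ?thesis
      using qbinomial_one[of q "Suc n"] by simp
  next
    case (Suc j)
    show ?thesis
    proof (cases "j < n")
      case True
      define d where "d = n - Suc j"
      have d: "n - j = Suc d" "Suc n - k = Suc d"
        using True Suc unfolding d_def by arith+
      have qd: "q ^ Suc (Suc j) * q ^ d = q ^ Suc n" "q ^ Suc d * q ^ Suc j = q ^ Suc n"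
        unfolding power_add[symmetric] using True d_def by (auto intro!: arg_cong[where f = "(^) q"])
      have "(1 - q ^ Suc k) * qbinomial q (Suc n) (Suc k)
          = (1 - q ^ Suc (Suc j)) * qbinomial q n (Suc (Suc j))
            + (1 - q ^ Suc (Suc j)) * q ^ d * qbinomial q n (Suc j)"
        using Suc by (simp add: d_def algebra_simps del: power_Suc)
      also have "\<dots> = (1 - q ^ Suc n) * qbinomial q n (Suc j)"
        unfolding Suc.IH[of "Suc j", folded d_def]
        by (simp add: algebra_simps flip: qd del: power_Suc)
      also have "\<dots> = (1 - q ^ Suc d) * qbinomial q n (Suc j)
            + q ^ Suc d * ((1 - q ^ Suc j) * qbinomial q n (Suc j))"
        by (simp add: right_diff_distrib left_diff_distrib mult.assoc[symmetric] qd(2) del: power_Suc)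
      also have "\<dots> = (1 - q ^ (Suc n - k)) * qbinomial q (Suc n) k"
        unfolding Suc.IH[of j] using Suc d by (simp add: algebra_simps del: power_Suc)
      finally show ?thesis .
    qed (use Suc in \<open>simp add: qbinomial_eq_0\<close>)
  qed
qed

lemma qbinomial_primitive_root_eq_0:
  fixes q :: "'a::idom"
  assumes q: "primitive_root q n" and "0 < k" "k < n"
  shows "qbinomial q n k = 0"
  using assms(2,3)
proof (induction k)
  case (Suc k)
  have "(1 - q ^ Suc k) * qbinomial q n (Suc k) = (1 - q ^ (n - k)) * qbinomial q n k"
    by (rule qbinomial_Suc_ratio)
  also have "\<dots> = 0"
    using Suc q by (cases "k = 0") (auto simp: primitive_root_def)
  finally show ?case
    using Suc.prems q by (auto simp: primitive_root_def)
qed simp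

section \<open>The q-binomial theorem in a division ring\<close>

definition skew_commute :: "'a::division_ring center \<Rightarrow> 'a \<Rightarrow> 'a \<Rightarrow> bool" where
  "skew_commute q a b \<longleftrightarrow> a * b = of_center q * b * a"

lemma skew_commute_power:
  assumes "skew_commute q a b"
  shows "skew_commute (q ^ m) (a ^ m) b"
  unfolding skew_commute_def
proof (induction m)
  case (Suc m)
  have "a ^ Suc m * b = a ^ m * (of_center q * b * a)"
    using assms by (simp only: skew_commute_def power_Suc2 mult.assoc)
  also have "\<dots> = of_center q * (a ^ m * b) * a"
    by (simp only: of_center_left_commute mult.assoc)
  also have "\<dots> = of_center (q ^ Suc m) * b * a ^ Suc m"
    by (simp add: Suc mult.assoc flip: power_Suc2)
  finally show ?case .
qed simp

lemma skew_commute_power_commute: "skew_commute q a b \<Longrightarrow> q ^ n = 1 \<Longrightarrow> commute (a ^ n) b"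
  using skew_commute_power[of q a b n] by (simp add: skew_commute_def commute_def)

lemma skew_binomial:
  assumes ab: "skew_commute q a b"
  shows "(a + b) ^ n = (\<Sum>k\<le>n. of_center (qbinomial q n k) * b ^ k * a ^ (n - k))"
proof (induction n)
  case (Suc n)
  define S where "S = (\<Sum>k\<le>n. of_center (qbinomial q n k) * b ^ k * a ^ (n - k))"
  have "S * a = (\<Sum>k\<le>n. of_center (qbinomial q n k) * b ^ k * a ^ (Suc n - k))"
    unfolding S_def sum_distrib_right
    by (intro sum.cong) (simp_all add: Suc_diff_le mult.assoc flip: power_Suc2)
  also have "\<dots> = (\<Sum>k\<le>Suc n. of_center (qbinomial q n k) * b ^ k * a ^ (Suc n - k))"
    by (simp add: qbinomial_eq_0)
  also have "\<dots> = a ^ Suc n + (\<Sum>k\<le>n. of_center (qbinomial q n (Suc k)) * b ^ Suc k * a ^ (n - k))"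
    by (subst sum.atMost_Suc_shift) (simp del: power_Suc)
  finally have Sa: "S * a = \<dots>" .
  have Sb: "S * b = (\<Sum>k\<le>n. of_center (q ^ (n - k) * qbinomial q n k) * b ^ Suc k * a ^ (n - k))"
    unfolding S_def sum_distrib_right
  proof (intro sum.cong refl)
    fix k
    have "of_center (qbinomial q n k) * b ^ k * a ^ (n - k) * b
        = of_center (qbinomial q n k) * b ^ k * (of_center (q ^ (n - k)) * b * a ^ (n - k))"
      using skew_commute_power[OF ab, of "n - k"] by (simp add: skew_commute_def mult.assoc)
    also have "\<dots> = of_center (qbinomial q n k) * (of_center (q ^ (n - k)) * (b ^ k * (b * a ^ (n - k))))"
      by (simp only: mult.assoc of_center_left_commute[of "b ^ k"])
    also have "\<dots> = of_center (q ^ (n - k) * qbinomial q n k) * b ^ Suc k * a ^ (n - k)"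
      by (simp only: of_center_hom(6) mult.assoc power_Suc2
          of_center_left_commute[of "of_center (qbinomial q n k)"])
    finally show "of_center (qbinomial q n k) * b ^ k * a ^ (n - k) * b = \<dots>" .
  qed
  have "(a + b) ^ Suc n = S * a + S * b"
    by (simp only: Suc S_def[symmetric] power_Suc2 distrib_left)
  also have "\<dots> = (\<Sum>k\<le>Suc n. of_center (qbinomial q (Suc n) k) * b ^ k * a ^ (Suc n - k))"
    unfolding Sa Sb
    by (subst sum.atMost_Suc_shift) (simp add: distrib_right sum.distrib add.assoc del: power_Suc)
  finally show ?case .
qed simp

lemma skew_binomial_primitive_root:
  assumes ab: "skew_commute q a b" and q: "primitive_root q n"
  shows "(a + b) ^ n = a ^ n + b ^ n"
proof -
  obtain m where m: "n = Suc m"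
    using q by (auto simp: primitive_root_def gr0_conv_Suc)
  have "(\<Sum>k\<le>m. of_center (qbinomial q n k) * b ^ k * a ^ (n - k))
      = (\<Sum>k\<in>{0}. of_center (qbinomial q n k) * b ^ k * a ^ (n - k))"
    using qbinomial_primitive_root_eq_0[OF q] m by (intro sum.mono_neutral_right) auto
  then show ?thesis
    unfolding skew_binomial[OF ab] m by (simp add: add.commute)
qed

lemma skew_commute_mult:
  assumes ab: "skew_commute q a b" and ac: "commute a c"
  shows "skew_commute q a (b * c)"
proof -
  have "a * (b * c) = of_center q * b * a * c"
    using ab by (simp only: skew_commute_def mult.assoc[symmetric])
  also have "\<dots> = of_center q * (b * c) * a"
    using ac by (simp only: commute_def mult.assoc)
  finally show ?thesis
    unfolding skew_commute_def .
qed

lemma skew_commute_mult':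
  assumes ac: "commute a c" and ab: "skew_commute q a b"
  shows "skew_commute q a (c * b)"
proof -
  have "a * (c * b) = c * (a * b)"
    using ac by (simp only: commute_def mult.assoc[symmetric])
  also have "\<dots> = c * (of_center q * b * a)"
    using ab by (simp only: skew_commute_def)
  also have "\<dots> = of_center q * (c * b) * a"
    by (simp only: mult.assoc of_center_left_commute)
  finally show ?thesis
    unfolding skew_commute_def .
qed

lemma skew_commute_mult_left':
  assumes cb: "commute c b" and ab: "skew_commute q a b"
  shows "skew_commute q (c * a) b"
proof -
  have "c * a * b = c * (of_center q * b * a)"
    using ab by (simp only: skew_commute_def mult.assoc)
  also have "\<dots> = of_center q * (c * b) * a"
    by (simp only: mult.assoc of_center_left_commute)
  also have "\<dots> = of_center q * b * (c * a)"
    using cb by (simp only: commute_def mult.assoc)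
  finally show ?thesis
    unfolding skew_commute_def .
qed

lemma skew_commute_minus: "skew_commute q a b \<Longrightarrow> skew_commute q a (- b)"
  by (simp add: skew_commute_def)

lemma skew_commute_swap:
  assumes "skew_commute q a b"
  shows "skew_commute (inverse q) b a"
proof (cases "q = 0")
  case True
  then have "a * b = 0"
    using assms by (simp add: skew_commute_def)
  then show ?thesis
    by (auto simp: skew_commute_def)
next
  case False
  have "of_center (inverse q) * (a * b) = of_center (inverse q * q) * (b * a)"
    using assms by (simp only: skew_commute_def of_center_hom(6) mult.assoc)
  also have "\<dots> = b * a"
    using False by simp
  finally show ?thesis
    by (simp add: skew_commute_def mult.assoc)
qed

lemma skew_commute_inverse_swap:
  assumes ab: "skew_commute q a b"
  shows "skew_commute q (inverse b) a"
proof (cases "b = 0")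
  case False
  have "inverse b * a = inverse b * (a * b) * inverse b"
    using False by (simp add: mult.assoc)
  also have "\<dots> = of_center q * (inverse b * b) * (a * inverse b)"
    using ab by (simp only: skew_commute_def mult.assoc of_center_left_commute)
  finally show ?thesis
    using False by (simp add: skew_commute_def mult.assoc)
qed (simp add: skew_commute_def)

lemma skew_commute_inverse: "skew_commute q a b \<Longrightarrow> skew_commute (inverse q) a (inverse b)"
  by (rule skew_commute_swap[OF skew_commute_inverse_swap])

lemma skew_commute_inverse_left: "skew_commute q a b \<Longrightarrow> skew_commute (inverse q) (inverse a) b"
  by (rule skew_commute_inverse_swap[OF skew_commute_swap])

lemma skew_product_power:
  assumes xy: "skew_commute (s ^ 2) x y"
  shows "(y * x) ^ n = of_center (s ^ (n * (n - 1))) * y ^ n * x ^ n"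
proof (induction n)
  case (Suc n)
  have "(y * x) ^ Suc n = of_center (s ^ (n * (n - 1))) * y ^ n * (x ^ n * y) * x"
    by (simp only: Suc power_Suc2 mult.assoc)
  also have "\<dots> = of_center (s ^ (n * (n - 1)) * (s ^ 2) ^ n) * (y ^ n * y) * (x ^ n * x)"
    using skew_commute_power[OF xy, of n]
    by (simp only: skew_commute_def of_center_hom(6) mult.assoc of_center_left_commute[of "y ^ n"])
  also have "s ^ (n * (n - 1)) * (s ^ 2) ^ n = s ^ (n * (n - 1) + 2 * n)"
    by (simp only: power_add power_mult)
  also have "n * (n - 1) + 2 * n = Suc n * (Suc n - 1)"
    by (cases n) (simp_all add: algebra_simps)
  finally show ?case
    by (simp only: power_Suc2)
qed simp

lemma skew_affine_power:
  fixes x y z :: "'a::division_ring"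
  assumes xy: "skew_commute (s ^ 2) x y" and xz: "commute x z" and yz: "commute y z"
    and s: "s ^ n = -1" and q: "primitive_root (s ^ 2) n"
  shows "(y * (x - z)) ^ n = (-1) ^ (n - 1) * (y ^ n * (x ^ n - z ^ n))"
proof -
  obtain m where m: "n = Suc m"
    using q by (auto simp: primitive_root_def gr0_conv_Suc)
  have skew: "skew_commute (s ^ 2) (y * x) (- (y * z))"
    using skew_commute_mult[OF skew_commute_mult_left'[OF commute_refl xy] commute_mult_left[OF yz xz]]
    by (rule skew_commute_minus)
  have sign: "s ^ (n * (n - 1)) = (-1) ^ m"
    unfolding power_mult s using m by simp
  have "(y * (x - z)) ^ n = (y * x + - (y * z)) ^ n"
    by (simp add: right_diff_distrib)
  also have "\<dots> = (y * x) ^ n + (- (y * z)) ^ n"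
    using skew q by (rule skew_binomial_primitive_root)
  also have "(y * x) ^ n = (-1) ^ m * (y ^ n * x ^ n)"
    using skew_product_power[OF xy, of n] unfolding sign by (simp add: mult.assoc)
  also have "(- (y * z)) ^ n = (-1) ^ n * (y ^ n * z ^ n)"
    by (simp only: power_minus[of "y * z"] power_mult_commute[OF yz])
  also have "(-1) ^ m * (y ^ n * x ^ n) + (-1) ^ n * (y ^ n * z ^ n)
      = (-1) ^ (n - 1) * (y ^ n * (x ^ n - z ^ n))"
    using m by (simp add: right_diff_distrib)
  finally show ?thesis .
qed

lemma neg_skew_affine_power:
  fixes x y z w :: "'a::division_ring"
  assumes xy: "skew_commute (s ^ 2) x y" and "commute x z" "commute y z"
    and "s ^ n = -1" and q: "primitive_root (s ^ 2) n" and w: "commute w (y * (x - z))"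
  shows "(- (w * (y * (x - z)))) ^ n = - (w ^ n * (y ^ n * (x ^ n - z ^ n)))"
proof -
  obtain m where m: "n = Suc m"
    using q by (auto simp: primitive_root_def gr0_conv_Suc)
  have "(- (w * (y * (x - z)))) ^ n = (-1) ^ n * (w ^ n * ((-1) ^ m * (y ^ n * (x ^ n - z ^ n))))"
    using skew_affine_power[OF assms(1-5)] m
    by (simp only: power_minus[of "w * _"] power_mult_commute[OF w] diff_Suc_1)
  also have "\<dots> = (-1) ^ Suc m * ((-1) ^ m * (w ^ n * (y ^ n * (x ^ n - z ^ n))))"
    unfolding m by (simp only: commute_left_commute[OF commute_sym[OF commute_minus_one_power[of m]]])
  also have "\<dots> = - (w ^ n * (y ^ n * (x ^ n - z ^ n)))"
    by (simp add: minus_one_power_mult_self)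
  finally show ?thesis .
qed

section \<open>Rational identities\<close>

text \<open>Under the substitution \<open>X1 \<mapsto> X1 * G\<close>, \<open>X2 \<mapsto> X2 / G\<close>, \<open>Y1 \<mapsto> inverse A\<close>,
  \<open>Y2 \<mapsto> B\<close>, \<open>Zi \<mapsto> Zi\<close> (the action of \<open>R\<close> on the centre), the expression \<open>Gt\<close> of the
  theorem becomes \<open>G\<close>, and the claimed preimages of \<open>inverse Y1\<close> and \<open>Y2\<close> become
  \<open>inverse Y1\<close> and \<open>Y2\<close>.\<close>

lemma birational_inverse_identities:
  fixes X1 Y1 Z1 X2 Y2 Z2 :: "'b::field"
  assumes nz: "X1 \<noteq> 0" "Y1 \<noteq> 0" "Z1 \<noteq> 0" "X2 \<noteq> 0" "Y2 \<noteq> 0" "Z2 \<noteq> 0"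
    and G_eq: "G = 1 + inverse X1 * Y1 * inverse Y2 * (X1 - Z1) * (X2 - inverse Z2)"
    and A_eq: "A = inverse Y2 + (inverse Y1 - inverse Y2 * inverse Z2) * inverse X2"
    and B_eq: "B = Z1 * inverse Z2 * Y1 + (Y2 - Y1 * inverse Z2) * X1"
    and nonzero: "G \<noteq> 0" "A \<noteq> 0" "B \<noteq> 0"
  shows "1 + inverse (X2 / G) * inverse A * inverse B * (X1 * G - Z1) * (X2 / G - inverse Z2) = G"
    and "Z1 / Z2 * inverse B + (A - Z1 * inverse B) * (X2 / G) = inverse Y1"
    and "inverse A + (B - Z1 * inverse A) / (X1 * G) = Y2"
proof -
  define nA where "nA = Y1 * Z2 * X2 + Y2 * Z2 - Y1"
  define nB where "nB = Z1 * Y1 + (Y2 * Z2 - Y1) * X1"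
  define nG where "nG = X1 * Y2 * Z2 + Y1 * (X1 - Z1) * (X2 * Z2 - 1)"
  have A: "A = nA / (Y1 * Y2 * Z2 * X2)" and B: "B = nB / Z2" and G: "G = nG / (X1 * Y2 * Z2)"
    unfolding A_eq B_eq G_eq nA_def nB_def nG_def using nz by (simp_all add: field_simps)
  have "nA \<noteq> 0" "nB \<noteq> 0" "nG \<noteq> 0"
    using nonzero A B G by auto
  note nonzero' = nz this
  have XG1: "X1 * G - Z1 = (X1 - Z1) * nA / (Y2 * Z2)"
    unfolding G nG_def nA_def using nz by (simp add: field_simps)
  have XG2: "X2 / G - inverse Z2 = (X2 * Z2 - 1) * nB / (nG * Z2)"
    unfolding G using nonzero' by (simp add: field_simps) (simp add: nG_def nB_def, algebra)
  show "1 + inverse (X2 / G) * inverse A * inverse B * (X1 * G - Z1) * (X2 / G - inverse Z2) = G"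
    unfolding XG1 XG2 unfolding A B G using nonzero'
    by (simp add: field_simps) (simp add: nG_def, algebra)
  show "Z1 / Z2 * inverse B + (A - Z1 * inverse B) * (X2 / G) = inverse Y1"
    unfolding A B G using nonzero'
    by (simp add: field_simps) (simp add: nG_def nA_def nB_def, algebra)
  show "inverse A + (B - Z1 * inverse A) / (X1 * G) = Y2"
    unfolding A B G using nonzero'
    by (simp add: field_simps) (simp add: nG_def nA_def nB_def, algebra)
qed

section \<open>The division algebra of the quantum torus pair\<close>

lemma xi_power_N: "0 < N \<Longrightarrow> xi N ^ N = -1"
  by (simp add: xi_def DeMoivre)

lemma primitive_root_xi_square:
  assumes N: "0 < N"
  shows "primitive_root (xi N ^ 2) N"
  unfolding primitive_root_def
proof (intro conjI allI impI N)
  show "(xi N ^ 2) ^ N = 1"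
    using xi_power_N[OF N] by (simp flip: power_mult add: power_mult[of _ N] mult.commute)
  fix k :: nat
  assume k: "0 < k" "k < N"
  show "(xi N ^ 2) ^ k \<noteq> 1"
  proof
    assume "(xi N ^ 2) ^ k = 1"
    then have "cos (2 * pi * real k / real N) = 1"
      by (simp add: xi_def DeMoivre field_simps flip: power_mult cis.sel(1))
    then obtain m :: int where "2 * pi * real k / real N = real_of_int m * 2 * pi"
      using cos_one_2pi_int by blast
    then have "int k = m * int N"
      using N by (simp add: field_simps) (metis of_int_eq_iff of_int_mult of_int_of_nat_eq)
    with k show False
      by (smt (verit) of_nat_less_iff of_nat_0_less_iff mult_le_cancel_right1 zero_less_mult_iff)
  qed
qed

locale div_W2 =
  fixes N :: nat and c :: "complex \<Rightarrow> 'a::division_ring" and x1 y1 z1 x2 y2 z2 :: 'a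
  assumes N_pos: "0 < N" and Div: "is_Div_W2 N c x1 y1 z1 x2 y2 z2"
begin

lemma c_hom: "c 1 = 1" "c (a + b) = c a + c b" "c (a * b) = c a * c b"
  and commute_c: "commute (c a) d"
  using Div unfolding is_Div_W2_def commute_def by blast+

lemma c_zero: "c 0 = 0"
  using c_hom(2)[of 0 0] by simp

lemma c_minus_one: "c (-1) = -1"
  by (rule minus_unique[symmetric]) (simp flip: c_hom(1,2) add: c_zero)

lemma c_power: "c (a ^ k) = c a ^ k"
  by (induction k) (simp_all add: c_hom)

lemma c_eq_1_iff: "c a = 1 \<longleftrightarrow> a = 1"
proof
  assume "c a = 1"
  show "a = 1"
  proof (rule ccontr)
    assume "a \<noteq> 1"
    have "c (a - 1) = 0"
      using c_hom(2)[of "a - 1" 1] c_hom(1) \<open>c a = 1\<close> by simp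
    then have "c 1 = 0"
      using c_hom(3)[of "a - 1" "inverse (a - 1)"] \<open>a \<noteq> 1\<close> by simp
    then show False
      using c_hom(1) by simp
  qed
qed (simp add: c_hom)

lemma generators_nonzero: "x1 \<noteq> 0" "y1 \<noteq> 0" "z1 \<noteq> 0" "x2 \<noteq> 0" "y2 \<noteq> 0" "z2 \<noteq> 0"
  using Div unfolding is_Div_W2_def by blast+

lemma commute_z: "u \<in> {x1, y1, z1, x2, y2, z2} \<Longrightarrow> commute z1 u"
  "u \<in> {x1, y1, z1, x2, y2, z2} \<Longrightarrow> commute z2 u"
  using Div unfolding is_Div_W2_def commute_def by blast+

lemma commute_factors: "commute x1 x2" "commute x1 y2" "commute y1 x2" "commute y1 y2"
  using Div unfolding is_Div_W2_def commute_def by blast+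

text \<open>Every element is a fraction of evaluations of normally ordered Laurent monomials, so
  commuting with the six generators already makes an element central.\<close>

lemma commute_generators_imp_central:
  assumes "commute u x1" "commute u y1" "commute u z1" "commute u x2" "commute u y2" "commute u z2"
  shows "commute u d"
proof -
  have "commute u (mono x1 y1 z1 x2 y2 z2 m)" for m
    unfolding mono_def using assms by (auto split: prod.splits intro!: commute_mult commute_power_int)
  then have qeval: "commute u (qeval c x1 y1 z1 x2 y2 z2 f)" for f
    unfolding qeval_def by (intro commute_sum commute_mult commute_sym[OF commute_c])
  obtain f t where "d = qeval c x1 y1 z1 x2 y2 z2 f * inverse (qeval c x1 y1 z1 x2 y2 z2 t)"
    using Div unfolding is_Div_W2_def by metis
  then show ?thesis
    by (simp add: commute_mult commute_inverse qeval)
qed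

lemma central_z: "commute z1 d" "commute z2 d" "commute d z1" "commute d z2"
proof -
  have "commute z1 d" "commute z2 d" for d
    by (rule commute_generators_imp_central; rule commute_z; simp)+
  then show "commute z1 d" "commute z2 d" "commute d z1" "commute d z2"
    by (simp_all add: commute_sym)
qed

lemmas commute_generators = central_z commute_factors commute_factors[THEN commute_sym]

definition xi_center :: "'a center" where
  "xi_center = to_center (c (xi N))"

lemma of_center_xi_center_power: "of_center (xi_center ^ k) = c (xi N ^ k)"
  using commute_c unfolding xi_center_def by (simp add: of_center_to_center c_power)

lemma xi_center_power_N: "xi_center ^ N = -1"
proof -
  have "of_center (xi_center ^ N) = of_center (-1)"
    unfolding of_center_xi_center_power xi_power_N[OF N_pos] c_minus_one by simp
  then show ?thesis
    by (rule of_center_inject[THEN iffD1])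
qed

lemma primitive_root_xi_center: "primitive_root (xi_center ^ 2) N"
  unfolding primitive_root_def
proof (intro conjI allI impI N_pos)
  show "(xi_center ^ 2) ^ N = 1"
    unfolding power_mult[symmetric] mult.commute[of 2] power_mult xi_center_power_N by simp
  fix k :: nat
  assume k: "0 < k" "k < N"
  show "(xi_center ^ 2) ^ k \<noteq> 1"
  proof
    assume "(xi_center ^ 2) ^ k = 1"
    then have "c ((xi N ^ 2) ^ k) = 1"
      using of_center_xi_center_power[of "2 * k"] by (simp add: power_mult)
    then show False
      using primitive_root_xi_square[OF N_pos] k by (simp add: c_eq_1_iff primitive_root_def)
  qed
qed

lemma inverse_xi_center: "inverse xi_center ^ N = -1" "primitive_root (inverse xi_center ^ 2) N"
  using xi_center_power_N primitive_root_inverse[OF primitive_root_xi_center]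
  by (simp_all add: power_inverse)

lemma skew_commute_generators:
  "skew_commute (xi_center ^ 2) x1 y1" "skew_commute (xi_center ^ 2) x2 y2"
  "skew_commute (xi_center ^ 2) (inverse x2) (inverse y2)"
  "skew_commute (inverse xi_center ^ 2) x2 (inverse y2)"
proof -
  show xy: "skew_commute (xi_center ^ 2) x1 y1" "skew_commute (xi_center ^ 2) x2 y2"
    using Div of_center_xi_center_power[of 2] unfolding is_Div_W2_def skew_commute_def by simp_all
  show "skew_commute (xi_center ^ 2) (inverse x2) (inverse y2)"
    "skew_commute (inverse xi_center ^ 2) x2 (inverse y2)"
    using skew_commute_inverse[OF skew_commute_inverse_left[OF xy(2)]] skew_commute_inverse[OF xy(2)]
    by (simp_all add: power_inverse)
qed

lemma central_powers: "commute (x1 ^ N) d" "commute (y1 ^ N) d" "commute (x2 ^ N) d" "commute (y2 ^ N) d"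
proof -
  have "(xi_center ^ 2) ^ N = 1" "inverse (xi_center ^ 2) ^ N = 1"
    using primitive_root_xi_center by (simp_all add: primitive_root_def power_inverse)
  note commutes = commute_power_left commute_refl commute_generators
    skew_commute_power_commute[OF skew_commute_generators(1) this(1)]
    skew_commute_power_commute[OF skew_commute_generators(2) this(1)]
    skew_commute_power_commute[OF skew_commute_swap[OF skew_commute_generators(1)] this(2)]
    skew_commute_power_commute[OF skew_commute_swap[OF skew_commute_generators(2)] this(2)]
  show "commute (x1 ^ N) d" "commute (y1 ^ N) d" "commute (x2 ^ N) d" "commute (y2 ^ N) d"
    by (rule commute_generators_imp_central; blast intro: commutes)+
qed

definition "X1 = to_center (x1 ^ N)"
definition "Y1 = to_center (y1 ^ N)"
definition "Z1 = to_center (z1 ^ N)"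
definition "X2 = to_center (x2 ^ N)"
definition "Y2 = to_center (y2 ^ N)"
definition "Z2 = to_center (z2 ^ N)"

definition "G_center = 1 + inverse X1 * Y1 * inverse Y2 * (X1 - Z1) * (X2 - inverse Z2)"
definition "Gt_center = 1 + inverse X2 * Y1 * inverse Y2 * (X1 - Z1) * (X2 - inverse Z2)"

lemma of_center_generator_powers [simp]:
  "of_center X1 = x1 ^ N" "of_center Y1 = y1 ^ N" "of_center Z1 = z1 ^ N"
  "of_center X2 = x2 ^ N" "of_center Y2 = y2 ^ N" "of_center Z2 = z2 ^ N"
  unfolding X1_def Y1_def Z1_def X2_def Y2_def Z2_def
  using central_powers central_z(1,2)[THEN commute_power_left]
  by (simp_all add: of_center_to_center)

lemma generator_powers_nonzero [simp]:
  "X1 \<noteq> 0" "Y1 \<noteq> 0" "Z1 \<noteq> 0" "X2 \<noteq> 0" "Y2 \<noteq> 0" "Z2 \<noteq> 0"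
  using generators_nonzero of_center_generator_powers by (metis of_center_hom(1) power_not_zero)+

end

section \<open>The automorphism \<open>R\<close> on the centre\<close>

locale div_W2_automorphism = div_W2 +
  fixes R :: "'a \<Rightarrow> 'a" and g :: 'a
  assumes aut: "is_alg_aut c R"
    and g_def: "g = 1 - inverse x1 * y1 * (z1 - x1) * inverse y2 * (x2 - inverse z2)"
    and R_z1: "R z1 = z1" and R_z2: "R z2 = z2"
    and R_x1: "R x1 = x1 * g"
    and R_x2: "R x2 = inverse g * x2"
    and R_inverse_y1: "R (inverse y1) = inverse y2 + (inverse y1 - inverse z2 * inverse y2) * inverse x2"
    and R_y2: "R y2 = z1 * inverse z2 * y1 + (y2 - inverse z2 * y1) * x1"
begin

lemma R_bij: "bij R"
  and R_one [simp]: "R 1 = 1"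
  and R_add [simp]: "R (a + b) = R a + R b"
  and R_mult [simp]: "R (a * b) = R a * R b"
  using aut by (simp_all add: is_alg_aut_def)

lemma R_zero [simp]: "R 0 = 0"
  using R_add[of 0 0] by simp

lemma R_minus [simp]: "R (- a) = - R a"
  by (rule minus_unique[symmetric]) (simp flip: R_add)

lemma R_diff [simp]: "R (a - b) = R a - R b"
  using R_add[of a "- b"] by simp

lemma R_power [simp]: "R (a ^ n) = R a ^ n"
  by (induction n) simp_all

lemma R_inverse [simp]: "R (inverse a) = inverse (R a)"
proof (cases "a = 0")
  case False
  then have "R a * R (inverse a) = 1"
    by (simp flip: R_mult)
  then show ?thesis
    by (rule inverse_unique[symmetric])
qed simp

lemma R_eq_0_iff [simp]: "R a = 0 \<longleftrightarrow> a = 0"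
  using R_bij R_zero by (metis bij_is_inj injD)

lemma commute_R_central:
  assumes "\<And>d. commute a d"
  shows "commute (R a) d"
proof -
  obtain d' where "d = R d'"
    using R_bij by (metis bij_pointE)
  then show ?thesis
    using assms[of d'] by (simp add: commute_def flip: R_mult)
qed

definition R_center :: "'a center \<Rightarrow> 'a center" where
  "R_center a = to_center (R (of_center a))"

lemma of_center_R_center [simp]: "of_center (R_center a) = R (of_center a)"
  unfolding R_center_def by (intro of_center_to_center commute_R_central commute_of_center)

lemma R_center_hom [simp]:
  "R_center 0 = 0" "R_center 1 = 1"
  "R_center (a + b) = R_center a + R_center b" "R_center (a - b) = R_center a - R_center b"
  "R_center (- a) = - R_center a" "R_center (a * b) = R_center a * R_center b"
  "R_center (inverse a) = inverse (R_center a)" "R_center (a / b) = R_center a / R_center b"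
  "R_center (a ^ n) = R_center a ^ n"
  by (simp_all flip: of_center_eq_iff add: divide_inverse)

lemma R_center_eq_0_iff [simp]: "R_center a = 0 \<longleftrightarrow> a = 0"
  by (simp flip: of_center_eq_iff)

lemma inv_R_of_center:
  assumes "R_center a = b"
  shows "inv R (of_center b) = of_center a"
  using R_bij assms[symmetric] by (simp add: bij_is_inj)

lemma R_center_X1: "R_center X1 = X1 + Y1 * (X1 - Z1) * (inverse Y2 * (X2 - inverse Z2))"
proof -
  define U where "U = y1 * (x1 - z1)"
  define W where "W = inverse y2 * (x2 - inverse z2)"
  have x1_inverse: "x1 * (inverse x1 * t) = t" for t
    using generators_nonzero(1) by (simp flip: mult.assoc)
  have skew: "skew_commute (xi_center ^ 2) x1 (U * W)"
    unfolding U_def W_def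
    by (intro skew_commute_mult skew_commute_generators(1) commute_intros commute_generators)
  have "R x1 = x1 + U * W"
    unfolding R_x1 g_def U_def W_def by (simp add: algebra_simps x1_inverse)
  then have "R (x1 ^ N) = (x1 + U * W) ^ N"
    by simp
  also have "\<dots> = x1 ^ N + (U * W) ^ N"
    using skew primitive_root_xi_center by (rule skew_binomial_primitive_root)
  also have "(U * W) ^ N = U ^ N * W ^ N"
    unfolding U_def W_def by (intro power_mult_commute commute_intros commute_generators)
  also have "U ^ N * W ^ N = y1 ^ N * (x1 ^ N - z1 ^ N) * (inverse y2 ^ N * (x2 ^ N - inverse z2 ^ N))"
  proof -
    have "U ^ N = (-1) ^ (N - 1) * (y1 ^ N * (x1 ^ N - z1 ^ N))"
      unfolding U_def
      by (rule skew_affine_power[OF skew_commute_generators(1) central_z(3) central_z(3)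
            xi_center_power_N primitive_root_xi_center])
    moreover have "W ^ N = (-1) ^ (N - 1) * (inverse y2 ^ N * (x2 ^ N - inverse z2 ^ N))"
      unfolding W_def
      by (rule skew_affine_power[OF skew_commute_generators(4) _ _ inverse_xi_center])
        (intro commute_intros commute_generators)+
    ultimately show ?thesis
      by (simp only: minus_one_power_mult_mult)
  qed
  finally show ?thesis
    by (simp flip: of_center_eq_iff add: power_inverse)
qed

lemma R_center_inverse_Y1:
  "R_center (inverse Y1) = inverse Y1 * inverse X2 - inverse Z2 * (inverse Y2 * (inverse X2 - Z2))"
proof -
  define V where "V = inverse y2 * (inverse x2 - z2)"
  have z2_inverse: "inverse z2 * (z2 * t) = t" for t
    using generators_nonzero(6) by (simp flip: mult.assoc)
  have skew: "skew_commute (xi_center ^ 2) (inverse y1 * inverse x2) (- (inverse z2 * V))"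
    unfolding V_def
    by (intro skew_commute_mult_left' skew_commute_minus skew_commute_mult' skew_commute_mult
        skew_commute_generators(3) commute_intros commute_generators)
  have "R (inverse y1) = inverse y1 * inverse x2 + - (inverse z2 * V)"
    unfolding R_inverse_y1 V_def
    using central_z(4)[of "inverse y2", unfolded commute_def]
    by (simp add: algebra_simps z2_inverse)
  then have "R (inverse y1 ^ N) = (inverse y1 * inverse x2 + - (inverse z2 * V)) ^ N"
    by (simp only: R_power)
  also have "\<dots> = (inverse y1 * inverse x2) ^ N + (- (inverse z2 * V)) ^ N"
    using skew primitive_root_xi_center by (rule skew_binomial_primitive_root)
  also have "(inverse y1 * inverse x2) ^ N = inverse y1 ^ N * inverse x2 ^ N"
    by (intro power_mult_commute commute_intros commute_generators)
  also have "(- (inverse z2 * V)) ^ N = - (inverse z2 ^ N * (inverse y2 ^ N * (inverse x2 ^ N - z2 ^ N)))"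
    unfolding V_def
    by (rule neg_skew_affine_power[OF skew_commute_generators(3) _ _ xi_center_power_N
          primitive_root_xi_center]) (intro commute_intros commute_generators)+
  finally show ?thesis
    by (simp flip: of_center_eq_iff add: power_inverse)
qed

lemma R_center_Y2: "R_center Y2 = Y2 * X1 - inverse Z2 * (Y1 * (X1 - Z1))"
proof -
  define U where "U = y1 * (x1 - z1)"
  have skew: "skew_commute (xi_center ^ 2) (y2 * x1) (- (inverse z2 * U))"
    unfolding U_def
    by (intro skew_commute_mult_left' skew_commute_minus skew_commute_mult' skew_commute_mult
        skew_commute_generators(1) commute_intros commute_generators)
  have "z1 * (inverse z2 * y1) = inverse z2 * (y1 * z1)"
    using central_z(1)[of "inverse z2 * y1"] by (simp add: commute_def mult.assoc)
  then have "R y2 = y2 * x1 + - (inverse z2 * U)"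
    unfolding R_y2 U_def by (simp add: algebra_simps)
  then have "R (y2 ^ N) = (y2 * x1 + - (inverse z2 * U)) ^ N"
    by (simp only: R_power)
  also have "\<dots> = (y2 * x1) ^ N + (- (inverse z2 * U)) ^ N"
    using skew primitive_root_xi_center by (rule skew_binomial_primitive_root)
  also have "(y2 * x1) ^ N = y2 ^ N * x1 ^ N"
    by (intro power_mult_commute commute_intros commute_generators)
  also have "(- (inverse z2 * U)) ^ N = - (inverse z2 ^ N * (y1 ^ N * (x1 ^ N - z1 ^ N)))"
    unfolding U_def
    by (rule neg_skew_affine_power[OF skew_commute_generators(1) _ _ xi_center_power_N
          primitive_root_xi_center]) (intro commute_intros commute_generators)+
  finally show ?thesis
    by (simp flip: of_center_eq_iff add: power_inverse)
qed

lemma R_center_X1_X2: "R_center (X1 * X2) = X1 * X2"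
proof -
  have "g \<noteq> 0"
    using R_eq_0_iff[of x1] generators_nonzero(1) R_x1 by auto
  then have "R (x1 * x2) = x1 * x2"
    by (simp add: R_x1 R_x2 mult.assoc flip: mult.assoc[of g])
  then have "R ((x1 * x2) ^ N) = (x1 * x2) ^ N"
    by (simp flip: R_mult)
  then show ?thesis
    using power_mult_commute[OF commute_factors(1)] by (simp flip: of_center_eq_iff)
qed

lemma R_center_Z: "R_center Z1 = Z1" "R_center Z2 = Z2"
  by (simp_all flip: of_center_eq_iff add: R_z1 R_z2)

lemma R_center_generator_powers:
  "R_center X1 = X1 * G_center"
  "R_center X2 = X2 / G_center"
  "R_center (inverse Y1) = inverse Y2 + (inverse Y1 - inverse Y2 * inverse Z2) * inverse X2"
  "R_center Y2 = Z1 * inverse Z2 * Y1 + (Y2 - Y1 * inverse Z2) * X1"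
proof -
  show X1: "R_center X1 = X1 * G_center"
    unfolding R_center_X1 G_center_def by (simp add: field_simps)
  then have "G_center \<noteq> 0"
    using R_center_eq_0_iff[of X1] by auto
  then show "R_center X2 = X2 / G_center"
    using R_center_X1_X2 X1 by (simp add: field_simps)
  show "R_center (inverse Y1) = inverse Y2 + (inverse Y1 - inverse Y2 * inverse Z2) * inverse X2"
    unfolding R_center_inverse_Y1 by (simp add: field_simps)
  show "R_center Y2 = Z1 * inverse Z2 * Y1 + (Y2 - Y1 * inverse Z2) * X1"
    unfolding R_center_Y2 by (simp add: field_simps)
qed

lemma R_center_inverse_images:
  "R_center (X1 / Gt_center) = X1"
  "R_center (X2 * Gt_center) = X2"
  "R_center (Z1 / Z2 * inverse Y2 + (inverse Y1 - Z1 * inverse Y2) * X2) = inverse Y1"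
  "R_center (Y1 + (Y2 - Z1 * Y1) / X1) = Y2"
proof -
  have nonzero: "G_center \<noteq> 0" "R_center (inverse Y1) \<noteq> 0" "R_center Y2 \<noteq> 0"
    using R_center_generator_powers(1) R_center_eq_0_iff[of X1] by auto
  note identities = birational_inverse_identities[OF generator_powers_nonzero
      G_center_def R_center_generator_powers(3,4) nonzero]
  have "R_center Gt_center = 1 + inverse (R_center X2) * inverse (R_center (inverse Y1))
      * inverse (R_center Y2) * (R_center X1 - R_center Z1) * (R_center X2 - inverse (R_center Z2))"
    unfolding Gt_center_def by simp
  also have "\<dots> = G_center"
    unfolding R_center_generator_powers(1,2) R_center_Z by (rule identities(1))
  finally have Gt: "R_center Gt_center = G_center" .
  show "R_center (X1 / Gt_center) = X1" "R_center (X2 * Gt_center) = X2"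
    using nonzero(1) by (simp_all add: Gt R_center_generator_powers(1,2))
  have "R_center (Z1 / Z2 * inverse Y2 + (inverse Y1 - Z1 * inverse Y2) * X2)
      = Z1 / Z2 * inverse (R_center Y2)
        + (R_center (inverse Y1) - Z1 * inverse (R_center Y2)) * (X2 / G_center)"
    by (simp add: R_center_Z R_center_generator_powers(2))
  then show "R_center (Z1 / Z2 * inverse Y2 + (inverse Y1 - Z1 * inverse Y2) * X2) = inverse Y1"
    unfolding identities(2) .
  have "R_center (Y1 + (Y2 - Z1 * Y1) / X1)
      = inverse (R_center (inverse Y1))
        + (R_center Y2 - Z1 * inverse (R_center (inverse Y1))) / (X1 * G_center)"
    by (simp add: R_center_Z R_center_generator_powers(1))
  then show "R_center (Y1 + (Y2 - Z1 * Y1) / X1) = Y2"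
    unfolding identities(3) .
qed

end

theorem proposition3p3:
  fixes N :: nat and c :: "complex \<Rightarrow> 'a::division_ring"
    and x1 y1 z1 x2 y2 z2 :: 'a and R :: "'a \<Rightarrow> 'a"
  assumes "N \<ge> 2"
    and D: "is_Div_W2 N c x1 y1 z1 x2 y2 z2"
    and aut: "is_alg_aut c R"
    and g_def: "g = 1 - inverse x1 * y1 * (z1 - x1) * inverse y2 * (x2 - inverse z2)"
    and Rz1: "R z1 = z1" and Rz2: "R z2 = z2"
    and Rx1: "R x1 = x1 * g"
    and Rx2: "R x2 = inverse g * x2"
    and Ry1: "R (inverse y1) = inverse y2 + (inverse y1 - inverse z2 * inverse y2) * inverse x2"
    and Ry2: "R y2 = z1 * inverse z2 * y1 + (y2 - inverse z2 * y1) * x1"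
    and G_def: "G = 1 + inverse (x1 ^ N) * y1 ^ N * inverse (y2 ^ N)
                      * (x1 ^ N - z1 ^ N) * (x2 ^ N - inverse (z2 ^ N))"
    and Gt_def: "Gt = 1 + inverse (x2 ^ N) * y1 ^ N * inverse (y2 ^ N)
                      * (x1 ^ N - z1 ^ N) * (x2 ^ N - inverse (z2 ^ N))"
  shows "R z1 = z1 \<and> R z2 = z2
    \<and> R (x1 ^ N) = x1 ^ N * G
    \<and> R (x2 ^ N) = x2 ^ N * inverse G
    \<and> R (inverse y1 ^ N) = inverse y2 ^ N
          + (inverse y1 ^ N - inverse y2 ^ N * inverse (z2 ^ N)) * inverse x2 ^ N
    \<and> R (y2 ^ N) = z1 ^ N * inverse (z2 ^ N) * y1 ^ N
          + (y2 ^ N - y1 ^ N * inverse (z2 ^ N)) * x1 ^ N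
    \<and> inv R (x1 ^ N) = x1 ^ N * inverse Gt
    \<and> inv R (x2 ^ N) = x2 ^ N * Gt
    \<and> inv R (inverse y1 ^ N) = z1 ^ N * inverse (z2 ^ N) * inverse y2 ^ N
          + (inverse y1 ^ N - z1 ^ N * inverse y2 ^ N) * x2 ^ N
    \<and> inv R (y2 ^ N) = y1 ^ N + (y2 ^ N - z1 ^ N * y1 ^ N) * inverse x1 ^ N"
proof -
  interpret div_W2_automorphism N c x1 y1 z1 x2 y2 z2 R g
    using assms by unfold_locales auto
  have "of_center G_center = G" "of_center Gt_center = Gt"
    by (simp_all add: G_def Gt_def G_center_def Gt_center_def)
  then show ?thesis
    using Rz1 Rz2 R_center_generator_powers[THEN arg_cong[where f = of_center]]
      R_center_inverse_images[THEN inv_R_of_center]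
    by (simp add: power_inverse divide_inverse)
qed

end
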